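(* Let $k\ge0$ be an integer and $a,b,c\in\mathbb{C}$ with $c\notin\{0,-1,-2,\dots\}$, $1+2c-b+k\notin\{0,-1,-2,\dots\}$, and $\mathrm{Re}(2c-a-2b+k)>0$. Then $${}_3F_2\!\left(\left.\begin{array}{c}a,\ b,\ c+1\\ 1+2c-b+k,\ c\end{array}\right|1\right)=\frac{\big[(a-2c)(b-c)+kc\big]\,\Gamma(2c-b+k+1)\,\Gamma(2c-a-2b+k)}{c\,\Gamma(2c-2b+k+1)\,\Gamma(2c-a-b+k+1)},$$ where $1/\Gamma$ is interpreted as the entire function.
   Context: ${}_3F_2(a_1,a_2,a_3;b_1,b_2;1)=\sum_{m\ge0}\frac{(a_1)_m(a_2)_m(a_3)_m}{m!\,(b_1)_m(b_2)_m}$ with $(\alpha)_m=\Gamma(\alpha+m)/\Gamma(\alpha)$, absolutely convergent when $\mathrm{Re}(b_1+b_2-a_1-a_2-a_3)>0$. *)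

theory Defs
  imports "HOL-Analysis.Analysis"
begin

definition hyp3F2_one :: "complex \<Rightarrow> complex \<Rightarrow> complex \<Rightarrow> complex \<Rightarrow> complex \<Rightarrow> complex" where
  "hyp3F2_one a1 a2 a3 b1 b2 =
     (\<Sum>m. pochhammer a1 m * pochhammer a2 m * pochhammer a3 m /
           (fact m * pochhammer b1 m * pochhammer b2 m))"

end

theory Submission
  imports Defs
begin

text \<open>Since \<open>(c+1)\<^sub>m / (c)\<^sub>m = 1 + m/c\<close>, the series splits as
  \<open>\<^sub>2F\<^sub>1(a,b;d;1) + (1/c) \<Sum> m \<cdot> t\<^sub>m\<close> with \<open>d = 1+2c-b+k\<close>, and an index shift turns the second
  sum into \<open>ab/d \<cdot> \<^sub>2F\<^sub>1(a+1,b+1;d+1;1)\<close>. Both series are evaluated by Gauss's summation theorem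
  \<open>\<^sub>2F\<^sub>1(a,b;c;1) = \<Gamma>(c)\<Gamma>(c-a-b)/(\<Gamma>(c-a)\<Gamma>(c-b))\<close>. For Gauss's theorem, the
  contiguous relation \<open>c(c-a-b) F(c) = (c-a)(c-b) F(c+1)\<close> comes from a telescoping
  partial-sum identity; iterating it \<open>n\<close> times and letting \<open>n \<rightarrow> \<infinity>\<close>, with \<open>F(c+n) \<rightarrow> 1\<close>,
  produces Euler's product for \<open>1/\<Gamma>\<close> on both sides.\<close>

definition hyp2F1_term :: "complex \<Rightarrow> complex \<Rightarrow> complex \<Rightarrow> nat \<Rightarrow> complex" where
  "hyp2F1_term a b c n = pochhammer a n * pochhammer b n / (fact n * pochhammer c n)"

definition hyp2F1_one :: "complex \<Rightarrow> complex \<Rightarrow> complex \<Rightarrow> complex" where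
  "hyp2F1_one a b c = (\<Sum>n. hyp2F1_term a b c n)"

lemma pochhammer_nonzero_if_notin_nonpos_Ints:
  "c \<notin> \<int>\<^sub>\<le>\<^sub>0 \<Longrightarrow> pochhammer (c::complex) n \<noteq> 0"
  by (auto simp: pochhammer_eq_0_iff)

lemma plus_of_nat_notin_nonpos_Ints:
  "(c::complex) \<notin> \<int>\<^sub>\<le>\<^sub>0 \<Longrightarrow> c + of_nat j \<notin> \<int>\<^sub>\<le>\<^sub>0"
  using nonpos_Ints_diff_Nats[of "c + of_nat j" "of_nat j"] by auto

lemma Re_pos_notin_nonpos_Ints: "Re (z::complex) > 0 \<Longrightarrow> z \<notin> \<int>\<^sub>\<le>\<^sub>0"
  by (auto elim!: nonpos_Ints_cases')

lemma pochhammer_plus_1_eq: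
  "(c::complex) \<noteq> 0 \<Longrightarrow> pochhammer (c + 1) n = (c + of_nat n) * pochhammer c n / c"
  using pochhammer_rec[of c n] pochhammer_rec'[of c n] by (simp add: field_simps)

lemma pochhammer_Suc_rGamma_series:
  "pochhammer (z::complex) (Suc n) = rGamma_series z n * fact n * exp (z * of_real (ln (real n)))"
  unfolding rGamma_series_def by simp

lemma cmod_le_cmod_plus_nonneg:
  "Re (u::complex) \<ge> 0 \<Longrightarrow> t \<ge> 0 \<Longrightarrow> norm u \<le> norm (u + of_real t)"
  unfolding cmod_def by (intro real_sqrt_le_mono) (simp add: power2_eq_square mult_mono)

lemma norm_pochhammer_le_shift:
  "Re w \<ge> 0 \<Longrightarrow> norm (pochhammer (w::complex) m) \<le> norm (pochhammer (w + of_nat j) m)"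
proof (induction m)
  case (Suc m)
  have "norm (w + of_nat m) \<le> norm ((w + of_nat m) + of_real (real j))"
    using Suc.prems by (intro cmod_le_cmod_plus_nonneg) auto
  hence "norm (w + of_nat m) \<le> norm (w + of_nat j + of_nat m)" by (simp add: algebra_simps)
  thus ?case using Suc by (simp add: pochhammer_Suc norm_mult mult_mono)
qed simp

subsection \<open>Size of the terms\<close>

lemma Suc_times_hyp2F1_term_Suc_rGamma_series:
  assumes c: "c \<notin> \<int>\<^sub>\<le>\<^sub>0"
  shows "of_nat (Suc n) * hyp2F1_term a b c (Suc n) =
     rGamma_series a n * rGamma_series b n / rGamma_series c n * exp ((a+b-c) * of_real (ln (real n)))"
proof -
  define L where "L = (of_real (ln (real n)) :: complex)"
  have exp_L: "exp ((a+b-c) * L) = exp (a*L) * exp (b*L) / exp (c*L)"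
    by (simp add: algebra_simps exp_add exp_diff)
  have "rGamma_series c n \<noteq> 0"
    using pochhammer_nonzero_if_notin_nonpos_Ints[OF c, of "Suc n"]
    unfolding pochhammer_Suc_rGamma_series by auto
  moreover have "(of_nat (Suc n)::complex) \<noteq> 0" "(fact n :: complex) \<noteq> 0"
    by (simp_all del: of_nat_Suc)
  ultimately show ?thesis
    unfolding hyp2F1_term_def pochhammer_Suc_rGamma_series L_def[symmetric] fact_Suc exp_L
    by (simp add: field_simps del: of_nat_Suc)
qed

text \<open>Euler's product makes the terms \<open>O(n\<^bsup>Re(a+b-c)-1\<^esup>)\<close>.\<close>

lemma norm_Suc_times_hyp2F1_term_Suc_le:
  assumes c: "c \<notin> \<int>\<^sub>\<le>\<^sub>0"
  obtains B where "\<And>n. n \<ge> 1 \<Longrightarrow>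
    norm (of_nat (Suc n) * hyp2F1_term a b c (Suc n)) \<le> B * real n powr Re (a+b-c)"
proof -
  define R where "R n = rGamma_series a n * rGamma_series b n / rGamma_series c n" for n
  have "R \<longlonglongrightarrow> rGamma a * rGamma b / rGamma c"
    unfolding R_def using c by (intro tendsto_intros) (auto simp: rGamma_eq_zero_iff)
  hence "Bseq R" by (rule convergent_imp_Bseq[OF convergentI])
  then obtain B where B: "\<And>n. norm (R n) \<le> B" by (meson BseqE)
  have "norm (of_nat (Suc n) * hyp2F1_term a b c (Suc n)) \<le> B * real n powr Re (a+b-c)"
    if "n \<ge> 1" for n
  proof -
    have "norm (exp ((a+b-c) * of_real (ln (real n)))) = real n powr Re (a+b-c)"
      using that by (simp add: powr_def)
    thus ?thesis
      using B[of n] unfolding Suc_times_hyp2F1_term_Suc_rGamma_series[OF c] R_def[symmetric] norm_mult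
      by (simp add: mult_right_mono)
  qed
  thus thesis by (rule that)
qed

lemma hyp2F1_term_times_n_tendsto_0:
  assumes c: "c \<notin> \<int>\<^sub>\<le>\<^sub>0" and re: "Re (c - a - b) > 0"
  shows "(\<lambda>n. of_nat n * hyp2F1_term a b c n) \<longlonglongrightarrow> 0"
proof -
  obtain B where B: "\<And>n. n \<ge> 1 \<Longrightarrow>
      norm (of_nat (Suc n) * hyp2F1_term a b c (Suc n)) \<le> B * real n powr Re (a+b-c)"
    using norm_Suc_times_hyp2F1_term_Suc_le[OF c] by blast
  have "(\<lambda>n. B * real n powr Re (a+b-c)) \<longlonglongrightarrow> 0"
    using re by (intro tendsto_mult_right_zero tendsto_neg_powr filterlim_real_sequentially) auto
  hence "(\<lambda>n. of_nat (Suc n) * hyp2F1_term a b c (Suc n)) \<longlonglongrightarrow> 0"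
    by (intro Lim_null_comparison[OF eventually_mono[OF eventually_ge_at_top[of 1] B]]) simp
  thus ?thesis by (rule LIMSEQ_imp_Suc)
qed

lemma summable_norm_if_Suc_times_le_powr:
  fixes T :: "nat \<Rightarrow> 'a::real_normed_div_algebra"
  assumes bound: "\<And>n. n \<ge> 1 \<Longrightarrow> norm (of_nat (Suc n) * T (Suc n)) \<le> B * real n powr s"
    and s: "s < 0"
  shows "summable (\<lambda>n. norm (T n))"
proof -
  have T_bound: "norm (T (Suc n)) \<le> B * real n powr (s - 1)" if "n \<ge> 1" for n
  proof -
    have "real n * norm (T (Suc n)) \<le> norm (of_nat (Suc n) * T (Suc n))"
      by (simp add: norm_mult mult_right_mono del: of_nat_Suc)
    also have "\<dots> \<le> B * real n powr s" by (rule bound[OF that])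
    also have "\<dots> = real n * (B * real n powr (s - 1))"
      using powr_mult_base[of "real n" "s - 1"] by (simp add: mult.left_commute)
    finally show ?thesis using that by simp
  qed
  have "summable (\<lambda>n. B * real n powr (s - 1))"
    using s by (intro summable_mult) (simp add: summable_real_powr_iff)
  hence "summable (\<lambda>n. norm (T (Suc n)))"
    by (rule summable_comparison_test'[where N=1]) (use T_bound in auto)
  thus ?thesis using summable_Suc_iff[of "\<lambda>n. norm (T n)"] by simp
qed

lemma summable_norm_hyp2F1_term:
  assumes c: "c \<notin> \<int>\<^sub>\<le>\<^sub>0" and re: "Re (c - a - b) > 0"
  shows "summable (\<lambda>n. norm (hyp2F1_term a b c n))"
proof -
  obtain B where "\<And>n. n \<ge> 1 \<Longrightarrow>
      norm (of_nat (Suc n) * hyp2F1_term a b c (Suc n)) \<le> B * real n powr Re (a+b-c)"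
    using norm_Suc_times_hyp2F1_term_Suc_le[OF c] by blast
  thus ?thesis by (rule summable_norm_if_Suc_times_le_powr) (use re in auto)
qed

lemma summable_hyp2F1_term:
  "c \<notin> \<int>\<^sub>\<le>\<^sub>0 \<Longrightarrow> Re (c - a - b) > 0 \<Longrightarrow> summable (hyp2F1_term a b c)"
  using summable_norm_hyp2F1_term summable_norm_cancel by blast

lemma summable_norm_hyp2F1_term_Suc:
  "c \<notin> \<int>\<^sub>\<le>\<^sub>0 \<Longrightarrow> Re (c - a - b) > 0 \<Longrightarrow> summable (\<lambda>m. norm (hyp2F1_term a b c (Suc m)))"
  using summable_norm_hyp2F1_term summable_Suc_iff[of "\<lambda>m. norm (hyp2F1_term a b c m)"] by simp

subsection \<open>The contiguous relation\<close>

lemma Suc_times_hyp2F1_term_Suc: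
  assumes c: "pochhammer c (Suc n) \<noteq> 0"
  shows "of_nat (Suc n) * hyp2F1_term a b c (Suc n)
       = hyp2F1_term a b c n * (a + of_nat n) * (b + of_nat n) / (c + of_nat n)"
proof -
  have "pochhammer c n \<noteq> 0" "c + of_nat n \<noteq> 0" using c by (simp_all add: pochhammer_Suc)
  moreover have "(of_nat (Suc n) :: complex) \<noteq> 0" by (rule of_nat_neq_0)
  ultimately show ?thesis
    unfolding hyp2F1_term_def pochhammer_Suc fact_Suc of_nat_mult
    by (simp add: divide_simps del: of_nat_Suc)
qed

lemma hyp2F1_term_plus_1:
  assumes c: "c \<notin> \<int>\<^sub>\<le>\<^sub>0"
  shows "hyp2F1_term a b (c + 1) n = hyp2F1_term a b c n * c / (c + of_nat n)"
proof -
  have "pochhammer c n \<noteq> 0" "c + of_nat n \<noteq> 0" "c \<noteq> 0"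
    using pochhammer_nonzero_if_notin_nonpos_Ints[OF c, of "Suc n"] c
    by (auto simp: pochhammer_Suc)
  thus ?thesis unfolding hyp2F1_term_def pochhammer_plus_1_eq[OF \<open>c \<noteq> 0\<close>]
    by (simp add: divide_simps)
qed

lemma hyp2F1_term_contiguous_step:
  assumes c: "c \<notin> \<int>\<^sub>\<le>\<^sub>0"
  shows "c * (c-a-b) * hyp2F1_term a b c n - (c-a)*(c-b) * hyp2F1_term a b (c+1) n
     = c * of_nat n * hyp2F1_term a b c n - c * (of_nat (Suc n) * hyp2F1_term a b c (Suc n))"
proof -
  have p: "pochhammer c (Suc n) \<noteq> 0" by (rule pochhammer_nonzero_if_notin_nonpos_Ints[OF c])
  hence "c + of_nat n \<noteq> 0" by (simp add: pochhammer_Suc)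
  thus ?thesis unfolding Suc_times_hyp2F1_term_Suc[OF p] hyp2F1_term_plus_1[OF c]
    by (simp add: field_simps)
qed

lemma hyp2F1_partial_sums_contiguous:
  assumes c: "c \<notin> \<int>\<^sub>\<le>\<^sub>0"
  shows "c * (c-a-b) * (\<Sum>n<N. hyp2F1_term a b c n) - (c-a)*(c-b) * (\<Sum>n<N. hyp2F1_term a b (c+1) n)
     = - (c * (of_nat N * hyp2F1_term a b c N))"
proof (induction N)
  case (Suc N)
  have "c * (c-a-b) * (\<Sum>n<Suc N. hyp2F1_term a b c n) - (c-a)*(c-b) * (\<Sum>n<Suc N. hyp2F1_term a b (c+1) n)
     = (c * (c-a-b) * (\<Sum>n<N. hyp2F1_term a b c n) - (c-a)*(c-b) * (\<Sum>n<N. hyp2F1_term a b (c+1) n))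
       + (c * (c-a-b) * hyp2F1_term a b c N - (c-a)*(c-b) * hyp2F1_term a b (c+1) N)"
    by (simp add: algebra_simps)
  also have "\<dots> = - (c * (of_nat (Suc N) * hyp2F1_term a b c (Suc N)))"
    unfolding Suc.IH hyp2F1_term_contiguous_step[OF c] by (simp add: algebra_simps)
  finally show ?case .
qed simp

lemma hyp2F1_one_contiguous:
  assumes c: "c \<notin> \<int>\<^sub>\<le>\<^sub>0" and re: "Re (c - a - b) > 0"
  shows "c * (c-a-b) * hyp2F1_one a b c = (c-a)*(c-b) * hyp2F1_one a b (c+1)"
proof -
  have c1: "c + 1 \<notin> \<int>\<^sub>\<le>\<^sub>0" using plus_of_nat_notin_nonpos_Ints[OF c, of 1] by simp
  have re1: "Re (c + 1 - a - b) > 0" using re by simp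
  let ?S = "\<lambda>N. c * (c-a-b) * (\<Sum>n<N. hyp2F1_term a b c n) - (c-a)*(c-b) * (\<Sum>n<N. hyp2F1_term a b (c+1) n)"
  have "?S \<longlonglongrightarrow> c * (c-a-b) * hyp2F1_one a b c - (c-a)*(c-b) * hyp2F1_one a b (c+1)"
    unfolding hyp2F1_one_def
    by (intro tendsto_diff tendsto_mult tendsto_const summable_LIMSEQ
        summable_hyp2F1_term[OF c re] summable_hyp2F1_term[OF c1 re1])
  moreover have "?S \<longlonglongrightarrow> - (c * 0)"
    unfolding hyp2F1_partial_sums_contiguous[OF c]
    by (intro tendsto_minus tendsto_mult tendsto_const hyp2F1_term_times_n_tendsto_0[OF c re])
  ultimately have "c * (c-a-b) * hyp2F1_one a b c - (c-a)*(c-b) * hyp2F1_one a b (c+1) = - (c * 0)"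
    by (rule LIMSEQ_unique)
  thus ?thesis by simp
qed

lemma hyp2F1_one_shift_pochhammer:
  assumes c: "c \<notin> \<int>\<^sub>\<le>\<^sub>0" and re: "Re (c - a - b) > 0"
  shows "hyp2F1_one a b c * pochhammer c n * pochhammer (c-a-b) n
       = pochhammer (c-a) n * pochhammer (c-b) n * hyp2F1_one a b (c + of_nat n)"
proof (induction n)
  case (Suc n)
  have contiguous: "(c + of_nat n) * (c + of_nat n - a - b) * hyp2F1_one a b (c + of_nat n)
      = (c + of_nat n - a) * (c + of_nat n - b) * hyp2F1_one a b (c + of_nat n + 1)"
    using re by (intro hyp2F1_one_contiguous plus_of_nat_notin_nonpos_Ints c) simp
  have "hyp2F1_one a b c * pochhammer c (Suc n) * pochhammer (c-a-b) (Suc n)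
      = (hyp2F1_one a b c * pochhammer c n * pochhammer (c-a-b) n) * ((c + of_nat n) * (c - a - b + of_nat n))"
    by (simp add: pochhammer_Suc mult_ac)
  also have "\<dots> = pochhammer (c-a) n * pochhammer (c-b) n
      * ((c + of_nat n) * (c + of_nat n - a - b) * hyp2F1_one a b (c + of_nat n))"
    unfolding Suc.IH by (simp add: algebra_simps)
  also have "\<dots> = pochhammer (c-a) (Suc n) * pochhammer (c-b) (Suc n) * hyp2F1_one a b (c + of_nat (Suc n))"
    unfolding contiguous by (simp add: pochhammer_Suc algebra_simps)
  finally show ?case .
qed simp

subsection \<open>Gauss's summation theorem\<close>

lemma hyp2F1_term_shift_bound:
  assumes w: "Re w > 0"
  shows "norm (hyp2F1_term a b (w + of_nat j) (Suc m))
       \<le> norm (hyp2F1_term a b w (Suc m)) * norm w / norm (w + of_nat j)"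
proof -
  have w0: "w \<noteq> 0" using Re_pos_notin_nonpos_Ints[OF w] by auto
  have wj0: "w + of_nat j \<noteq> 0" using Re_pos_notin_nonpos_Ints[of "w + of_nat j"] w by auto
  have p1: "pochhammer (w+1) m \<noteq> 0"
    using w by (intro pochhammer_nonzero_if_notin_nonpos_Ints Re_pos_notin_nonpos_Ints) simp
  have mono: "norm (pochhammer (w+1) m) \<le> norm (pochhammer (w + of_nat j + 1) m)"
    using norm_pochhammer_le_shift[of "w+1" m j] w by (simp add: algebra_simps)
  define N where "N = norm (pochhammer a (Suc m) * pochhammer b (Suc m) / fact (Suc m))"
  have "norm (hyp2F1_term a b (w + of_nat j) (Suc m))
      = N / (norm (w + of_nat j) * norm (pochhammer (w + of_nat j + 1) m))"
    unfolding hyp2F1_term_def N_def pochhammer_rec[of "w + of_nat j"]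
    by (simp add: norm_mult norm_divide mult_ac)
  also have "\<dots> \<le> N / (norm (w + of_nat j) * norm (pochhammer (w+1) m))"
    unfolding N_def using mono p1 wj0 by (intro divide_left_mono mult_left_mono mult_pos_pos) auto
  also have "\<dots> = (N / (norm w * norm (pochhammer (w+1) m))) * norm w / norm (w + of_nat j)"
    using w0 by (simp add: field_simps)
  also have "N / (norm w * norm (pochhammer (w+1) m)) = norm (hyp2F1_term a b w (Suc m))"
    unfolding hyp2F1_term_def N_def pochhammer_rec[of w] by (simp add: norm_mult norm_divide mult_ac)
  finally show ?thesis .
qed

lemma norm_hyp2F1_one_minus_1_le:
  assumes w: "Re w > 0" and re: "Re (w - a - b) > 0"
  shows "norm (hyp2F1_one a b (w + of_nat j) - 1)
       \<le> norm w * (\<Sum>m. norm (hyp2F1_term a b w (Suc m))) / norm (w + of_nat j)"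
proof -
  define u where "u = w + of_nat j"
  have u: "u \<notin> \<int>\<^sub>\<le>\<^sub>0" "Re (u - a - b) > 0"
    using w re by (auto simp: u_def intro!: Re_pos_notin_nonpos_Ints)
  have sum_w: "summable (\<lambda>m. norm (hyp2F1_term a b w (Suc m)))"
    using w re by (intro summable_norm_hyp2F1_term_Suc Re_pos_notin_nonpos_Ints)
  have sum_u: "summable (\<lambda>m. norm (hyp2F1_term a b u (Suc m)))"
    using u by (rule summable_norm_hyp2F1_term_Suc)
  have "hyp2F1_one a b u - 1 = (\<Sum>m. hyp2F1_term a b u (Suc m))"
    unfolding hyp2F1_one_def using suminf_split_head[OF summable_hyp2F1_term[OF u]]
    by (simp add: hyp2F1_term_def)
  hence "norm (hyp2F1_one a b u - 1) \<le> (\<Sum>m. norm (hyp2F1_term a b u (Suc m)))"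
    using summable_norm[OF sum_u] by simp
  also have "\<dots> \<le> (\<Sum>m. norm (hyp2F1_term a b w (Suc m)) * norm w / norm u)"
    using sum_u sum_w hyp2F1_term_shift_bound[OF w] unfolding u_def
    by (intro suminf_le) (auto intro: summable_divide summable_mult2)
  also have "\<dots> = (\<Sum>m. norm (hyp2F1_term a b w (Suc m)) * norm w) / norm u"
    by (rule suminf_divide[OF summable_mult2[OF sum_w]])
  also have "\<dots> = norm w * (\<Sum>m. norm (hyp2F1_term a b w (Suc m))) / norm u"
    using suminf_mult2[OF sum_w, of "norm w"] by (simp add: mult.commute)
  finally show ?thesis unfolding u_def .
qed

lemma hyp2F1_one_shift_tendsto_1:
  assumes c: "c \<notin> \<int>\<^sub>\<le>\<^sub>0" and re: "Re (c - a - b) > 0"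
  shows "(\<lambda>n. hyp2F1_one a b (c + of_nat n)) \<longlonglongrightarrow> 1"
proof -
  obtain N :: nat where N: "- Re c < of_nat N" using reals_Archimedean2 by blast
  define w where "w = c + of_nat N"
  have w: "Re w > 0" and rew: "Re (w - a - b) > 0"
    using N re by (simp_all add: w_def)
  define K where "K = norm w * (\<Sum>m. norm (hyp2F1_term a b w (Suc m)))"
  have "(\<lambda>j. hyp2F1_one a b (w + of_nat j) - 1) \<longlonglongrightarrow> 0"
  proof (rule Lim_null_comparison)
    show "\<forall>\<^sub>F j in sequentially. norm (hyp2F1_one a b (w + of_nat j) - 1) \<le> K / real j"
    proof (rule eventually_mono[OF eventually_ge_at_top[of "1::nat"]])
      fix j :: nat assume j: "j \<ge> 1"
      have "K \<ge> 0"
        unfolding K_def using summable_norm_hyp2F1_term_Suc[OF Re_pos_notin_nonpos_Ints[OF w] rew]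
        by (intro mult_nonneg_nonneg suminf_nonneg) auto
      moreover have "real j \<le> norm (w + of_nat j)"
        using w complex_Re_le_cmod[of "w + of_nat j"] by simp
      ultimately have "K / norm (w + of_nat j) \<le> K / real j"
        using j by (intro divide_left_mono mult_pos_pos) auto
      thus "norm (hyp2F1_one a b (w + of_nat j) - 1) \<le> K / real j"
        using norm_hyp2F1_one_minus_1_le[OF w rew, of j] unfolding K_def by linarith
    qed
  qed (rule lim_const_over_n)
  hence "(\<lambda>j. hyp2F1_one a b (w + of_nat j)) \<longlonglongrightarrow> 1"
    using Lim_null by blast
  hence "(\<lambda>n. hyp2F1_one a b (c + of_nat (n + N))) \<longlonglongrightarrow> 1"
    unfolding w_def by (simp add: algebra_simps)
  thus ?thesis by (rule LIMSEQ_offset)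
qed

text \<open>As \<open>(z)\<^sub>n\<^sub>+\<^sub>1 = n! n\<^sup>z / \<Gamma>\<^sub>n(z)\<close> with \<open>1/\<Gamma>\<^sub>n(z) \<rightarrow> 1/\<Gamma>(z)\<close>, and \<open>c + (c-a-b) = (c-a) + (c-b)\<close>,
  both sides of the shifted relation carry the same factor \<open>n!\<^sup>2 n\<^bsup>2c-a-b\<^esup>\<close>.\<close>

theorem Gauss_hyp2F1_one:
  assumes c: "c \<notin> \<int>\<^sub>\<le>\<^sub>0" and re: "Re (c - a - b) > 0"
  shows "hyp2F1_one a b c = Gamma c * Gamma (c-a-b) * rGamma (c-a) * rGamma (c-b)"
proof -
  define e where "e = c - a - b"
  have e: "e \<notin> \<int>\<^sub>\<le>\<^sub>0" using Re_pos_notin_nonpos_Ints re by (simp add: e_def)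
  have Euler_form: "hyp2F1_one a b c * rGamma_series c n * rGamma_series e n =
        rGamma_series (c-a) n * rGamma_series (c-b) n * hyp2F1_one a b (c + of_nat (Suc n))" for n
  proof -
    define L where "L = (of_real (ln (real n)) :: complex)"
    define X where "X = fact n * fact n * exp (c*L) * exp (e*L)"
    have X0: "X \<noteq> 0" unfolding X_def by simp
    have X_alt: "X = fact n * fact n * exp ((c-a)*L) * exp ((c-b)*L)"
      unfolding X_def e_def by (simp add: exp_add[symmetric] algebra_simps)
    have "(hyp2F1_one a b c * rGamma_series c n * rGamma_series e n) * X =
          hyp2F1_one a b c * pochhammer c (Suc n) * pochhammer e (Suc n)"
      unfolding X_def pochhammer_Suc_rGamma_series L_def by (simp add: mult_ac)
    also have "\<dots> = pochhammer (c-a) (Suc n) * pochhammer (c-b) (Suc n) * hyp2F1_one a b (c + of_nat (Suc n))"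
      unfolding e_def by (rule hyp2F1_one_shift_pochhammer[OF c re])
    also have "\<dots> = (rGamma_series (c-a) n * rGamma_series (c-b) n * hyp2F1_one a b (c + of_nat (Suc n))) * X"
      unfolding X_alt pochhammer_Suc_rGamma_series L_def by (simp add: mult_ac)
    finally show ?thesis using X0 by simp
  qed
  have "(\<lambda>n. hyp2F1_one a b c * rGamma_series c n * rGamma_series e n)
      \<longlonglongrightarrow> hyp2F1_one a b c * rGamma c * rGamma e"
    by (intro tendsto_intros)
  moreover have "(\<lambda>n. hyp2F1_one a b c * rGamma_series c n * rGamma_series e n)
      \<longlonglongrightarrow> rGamma (c-a) * rGamma (c-b) * 1"
    unfolding Euler_form
    by (intro tendsto_mult rGamma_series_LIMSEQ LIMSEQ_Suc[OF hyp2F1_one_shift_tendsto_1[OF c re]])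
  ultimately have "hyp2F1_one a b c * rGamma c * rGamma e = rGamma (c-a) * rGamma (c-b)"
    using LIMSEQ_unique by fastforce
  moreover have "rGamma c \<noteq> 0" "rGamma e \<noteq> 0" using c e by (auto simp: rGamma_eq_zero_iff)
  ultimately show ?thesis unfolding e_def[symmetric] Gamma_def by (simp add: field_simps)
qed

subsection \<open>Reduction of the \<open>\<^sub>3F\<^sub>2\<close> series\<close>

lemma Suc_times_hyp2F1_term_Suc_eq_shifted:
  assumes d: "d + 1 \<notin> \<int>\<^sub>\<le>\<^sub>0" "d \<noteq> 0"
  shows "of_nat (Suc j) * hyp2F1_term a b d (Suc j) = a * b / d * hyp2F1_term (a+1) (b+1) (d+1) j"
  using pochhammer_nonzero_if_notin_nonpos_Ints[OF d(1), of j] d(2)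
  unfolding hyp2F1_term_def pochhammer_rec fact_Suc by (simp add: field_simps del: of_nat_Suc)

lemma hyp3F2_one_c_plus_1_c:
  assumes c: "c \<notin> \<int>\<^sub>\<le>\<^sub>0" and d: "d \<notin> \<int>\<^sub>\<le>\<^sub>0" and re: "Re (d - a - b) > 1"
  shows "hyp3F2_one a b (c + 1) d c
       = hyp2F1_one a b d + a * b / (c * d) * hyp2F1_one (a+1) (b+1) (d+1)"
proof -
  have d1: "d + 1 \<notin> \<int>\<^sub>\<le>\<^sub>0" using plus_of_nat_notin_nonpos_Ints[OF d, of 1] by simp
  have d0: "d \<noteq> 0" and c0: "c \<noteq> 0" using c d by auto
  have re1: "Re (d - a - b) > 0" and re2: "Re (d + 1 - (a + 1) - (b + 1)) > 0" using re by simp_all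
  define g where "g m = of_nat m * hyp2F1_term a b d m" for m
  have g_Suc: "g (Suc j) = a * b / d * hyp2F1_term (a+1) (b+1) (d+1) j" for j
    unfolding g_def by (rule Suc_times_hyp2F1_term_Suc_eq_shifted[OF d1 d0])
  have "summable (\<lambda>j. g (Suc j))"
    unfolding g_Suc by (intro summable_mult summable_hyp2F1_term d1 re2)
  hence g: "summable g" by (simp only: summable_Suc_iff)
  have "suminf g = (\<Sum>j. g (Suc j))"
    using suminf_split_head[OF g] by (simp add: g_def)
  also have "\<dots> = a * b / d * hyp2F1_one (a+1) (b+1) (d+1)"
    unfolding g_Suc hyp2F1_one_def by (rule suminf_mult[OF summable_hyp2F1_term[OF d1 re2]])
  finally have "suminf g = a * b / d * hyp2F1_one (a+1) (b+1) (d+1)" .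
  moreover have "pochhammer a m * pochhammer b m * pochhammer (c + 1) m /
           (fact m * pochhammer d m * pochhammer c m) = hyp2F1_term a b d m + g m / c" for m
    using pochhammer_nonzero_if_notin_nonpos_Ints[OF c, of m] c0
      pochhammer_nonzero_if_notin_nonpos_Ints[OF d, of m]
    unfolding pochhammer_plus_1_eq[OF c0] g_def hyp2F1_term_def by (simp add: field_simps)
  hence "hyp3F2_one a b (c + 1) d c = (\<Sum>m. hyp2F1_term a b d m + g m / c)"
    unfolding hyp3F2_one_def by simp
  moreover have "\<dots> = hyp2F1_one a b d + suminf g / c"
    unfolding hyp2F1_one_def using summable_hyp2F1_term[OF d re1] g
    by (subst suminf_add[symmetric]) (auto intro: summable_divide simp: suminf_divide)
  ultimately show ?thesis by simp
qed

theorem mainTheorem14: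
  fixes a b c :: complex and k :: nat
  assumes "c \<notin> \<int>\<^sub>\<le>\<^sub>0"
    and "1 + 2*c - b + of_nat k \<notin> \<int>\<^sub>\<le>\<^sub>0"
    and "Re (2*c - a - 2*b + of_nat k) > 0"
  shows "hyp3F2_one a b (c + 1) (1 + 2*c - b + of_nat k) c =
    ((a - 2*c) * (b - c) + of_nat k * c) * Gamma (2*c - b + of_nat k + 1)
      * Gamma (2*c - a - 2*b + of_nat k)
      * rGamma (2*c - 2*b + of_nat k + 1) * rGamma (2*c - a - b + of_nat k + 1) / c"
proof -
  define d where "d = 1 + 2*c - b + of_nat k"
  define e where "e = 2*c - a - 2*b + of_nat k"
  have c: "c \<notin> \<int>\<^sub>\<le>\<^sub>0" and d: "d \<notin> \<int>\<^sub>\<le>\<^sub>0" and re: "Re e > 0"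
    using assms by (simp_all add: d_def e_def)
  hence e: "e \<notin> \<int>\<^sub>\<le>\<^sub>0" by (intro Re_pos_notin_nonpos_Ints)
  have d1: "d + 1 \<notin> \<int>\<^sub>\<le>\<^sub>0" using plus_of_nat_notin_nonpos_Ints[OF d, of 1] by simp
  have c0: "c \<noteq> 0" and d0: "d \<noteq> 0" using c d by auto
  have de: "d - a - b = e + 1" "d - a - (b + 1) = e"
    "d + 1 - (a + 1) = d - a" "d + 1 - (b + 1) = d - b"
    by (simp_all add: d_def e_def algebra_simps)
  have "hyp3F2_one a b (c + 1) d c
      = Gamma d * Gamma (e+1) * rGamma (d-a) * rGamma (d-b)
        + a * b / (c * d) * (Gamma (d+1) * Gamma e * rGamma (d-a) * rGamma (d-b))"
    using hyp3F2_one_c_plus_1_c[OF c d, of a b] Gauss_hyp2F1_one[OF d, of a b]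
      Gauss_hyp2F1_one[OF d1, of "a+1" "b+1"] re
    unfolding de by simp
  also have "\<dots> = (c * e + a * b) * Gamma d * Gamma e * rGamma (d-a) * rGamma (d-b) / c"
    using Gamma_plus1[OF e] Gamma_plus1[OF d] c0 d0 by (simp add: field_simps)
  finally show ?thesis
    unfolding d_def e_def by (simp add: algebra_simps)
qed

end
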